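(* For every integer $K\ge1$, $$s(4,K,2)=\begin{cases}\left\lceil\frac{2K}{3}\right\rceil & \text{if } K\equiv 0,2 \text{ or } 5 \pmod 6,\\[2pt] \left\lceil\frac{2K}{3}\right\rceil+1 & \text{otherwise.}\end{cases}$$
   Context: A placement delivery array $S$-PDA$(F,K,Z)$ is an $F\times K$ array $R=(r_{j,k})$, $1\le j\le F$, $1\le k\le K$, over a finite set $S$ such that: (1) each cell is either empty or contains an element of $S$; (2) each column contains exactly $Z$ empty cells; (3) each element of $S$ occurs at most once in each row and at most once in each column; (4) if two distinct nonempty cells satisfy $r_{j_1,k_1}=r_{j_2,k_2}=t\in S$, then the cells $r_{j_1,k_2}$ and $r_{j_2,k_1}$ are empty. For integers $F,K\ge1$, $0\le Z\le F$, define $s(F,K,Z)=\min\{|S| : \text{there exists an } S\text{-PDA}(F,K,Z)\}$. *)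

theory Defs
  imports Complex_Main
begin

text \<open>An F x K array over S: rows 1..F, columns 1..K; None = empty cell.\<close>
definition is_PDA :: "nat \<Rightarrow> nat \<Rightarrow> nat \<Rightarrow> 'a set \<Rightarrow> (nat \<Rightarrow> nat \<Rightarrow> 'a option) \<Rightarrow> bool" where
  "is_PDA F K Z S R \<longleftrightarrow>
     finite S \<and>
     (\<forall>j\<in>{1..F}. \<forall>k\<in>{1..K}. R j k = None \<or> (\<exists>t\<in>S. R j k = Some t)) \<and>
     (\<forall>k\<in>{1..K}. card {j\<in>{1..F}. R j k = None} = Z) \<and>
     (\<forall>t\<in>S. \<forall>j\<in>{1..F}. \<forall>k1\<in>{1..K}. \<forall>k2\<in>{1..K}.
        R j k1 = Some t \<and> R j k2 = Some t \<longrightarrow> k1 = k2) \<and>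
     (\<forall>t\<in>S. \<forall>k\<in>{1..K}. \<forall>j1\<in>{1..F}. \<forall>j2\<in>{1..F}.
        R j1 k = Some t \<and> R j2 k = Some t \<longrightarrow> j1 = j2) \<and>
     (\<forall>t\<in>S. \<forall>j1\<in>{1..F}. \<forall>j2\<in>{1..F}. \<forall>k1\<in>{1..K}. \<forall>k2\<in>{1..K}.
        (j1, k1) \<noteq> (j2, k2) \<and> R j1 k1 = Some t \<and> R j2 k2 = Some t \<longrightarrow>
        R j1 k2 = None \<and> R j2 k1 = None)"

text \<open>Minimal alphabet size; alphabets taken as finite sets of naturals (WLOG by relabelling).\<close>
definition s_PDA :: "nat \<Rightarrow> nat \<Rightarrow> nat \<Rightarrow> nat" where
  "s_PDA F K Z = (LEAST n. \<exists>(S::nat set) R. is_PDA F K Z S R \<and> card S = n)"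

end

theory Submission
  imports Defs
begin

text \<open>A symbol can fill at most three cells of a \<open>4 \<times> K\<close> array with two empty cells per
  column: two occurrences empty each other's cross cells, so all occurrences but one lie in the two
  empty cells of a single column. As \<open>2 K\<close> cells are filled, \<open>3 |S| = 2 K + e\<close> where \<open>e\<close> is
  the total deficit of the symbols, and it suffices to show that \<open>e = 0\<close> forces \<open>6 dvd K\<close> and
  that \<open>e = 1\<close> is impossible. Classify the columns by their pair \<open>{x, y}\<close> of filled rows.
  Reading row \<open>x\<close> of the columns of pattern \<open>{x, y}\<close> matches those holding a full symbol with
  the full symbols missing row \<open>y\<close>; comparing with row \<open>y\<close> gives balance equations between
  rows, corrected only by the deficient symbols. Without deficient symbols all six patterns occur
  equally often; a single symbol with two occurrences violates the balance. The bound is attained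
  by stacking copies of a \<open>4 \<times> 6\<close> array on four symbols and one of six small arrays for the
  remainder \<open>K mod 6\<close>.\<close>

lemma is_PDA_intro:
  assumes "finite S"
    and "\<And>j k. j \<in> {1..F} \<Longrightarrow> k \<in> {1..K} \<Longrightarrow> R j k = None \<or> (\<exists>t\<in>S. R j k = Some t)"
    and "\<And>k. k \<in> {1..K} \<Longrightarrow> card {j\<in>{1..F}. R j k = None} = Z"
    and cross: "\<And>j1 j2 k1 k2 t. j1 \<in> {1..F} \<Longrightarrow> j2 \<in> {1..F} \<Longrightarrow>
      k1 \<in> {1..K} \<Longrightarrow> k2 \<in> {1..K} \<Longrightarrow> (j1, k1) \<noteq> (j2, k2) \<Longrightarrow> R j1 k1 = Some t \<Longrightarrow> R j2 k2 = Some t \<Longrightarrow>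
      R j1 k2 = None \<and> R j2 k1 = None"
  shows "is_PDA F K Z S R"
proof -
  have "k1 = k2"
    if "j \<in> {1..F}" "k1 \<in> {1..K}" "k2 \<in> {1..K}" "R j k1 = Some t" "R j k2 = Some t" for j k1 k2 t
    using cross[of j j k1 k2 t] that by fastforce
  moreover have "j1 = j2"
    if "k \<in> {1..K}" "j1 \<in> {1..F}" "j2 \<in> {1..F}" "R j1 k = Some t" "R j2 k = Some t" for k j1 j2 t
    using cross[of j1 j2 k k t] that by fastforce
  ultimately show ?thesis
    unfolding is_PDA_def using assms by blast
qed

locale pda =
  fixes F K Z :: nat and S :: "'a set" and R :: "nat \<Rightarrow> nat \<Rightarrow> 'a option"
  assumes is_pda: "is_PDA F K Z S R"
begin

lemma finite_alphabet: "finite S"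
  using is_pda unfolding is_PDA_def by (elim conjE)

lemma entry_in_alphabet:
  assumes "j \<in> {1..F}" "k \<in> {1..K}" "R j k = Some t"
  shows "t \<in> S"
proof -
  have "\<forall>j\<in>{1..F}. \<forall>k\<in>{1..K}. R j k = None \<or> (\<exists>t\<in>S. R j k = Some t)"
    using is_pda unfolding is_PDA_def by (elim conjE)
  then show ?thesis using assms by fastforce
qed

lemma card_empty_cells: "k \<in> {1..K} \<Longrightarrow> card {j\<in>{1..F}. R j k = None} = Z"
  using is_pda unfolding is_PDA_def by (elim conjE) blast

lemma cross_cells_empty:
  assumes "j1 \<in> {1..F}" "j2 \<in> {1..F}" "k1 \<in> {1..K}" "k2 \<in> {1..K}" "(j1, k1) \<noteq> (j2, k2)"
    and "R j1 k1 = Some t" "R j2 k2 = Some t"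
  shows "R j1 k2 = None \<and> R j2 k1 = None"
proof -
  have "\<forall>t\<in>S. \<forall>j1\<in>{1..F}. \<forall>j2\<in>{1..F}. \<forall>k1\<in>{1..K}. \<forall>k2\<in>{1..K}.
      (j1, k1) \<noteq> (j2, k2) \<and> R j1 k1 = Some t \<and> R j2 k2 = Some t \<longrightarrow>
      R j1 k2 = None \<and> R j2 k1 = None"
    using is_pda unfolding is_PDA_def by (elim conjE)
  moreover have "t \<in> S" using assms entry_in_alphabet by blast
  ultimately show ?thesis using assms by blast
qed

lemma row_unique:
  "j \<in> {1..F} \<Longrightarrow> k1 \<in> {1..K} \<Longrightarrow> k2 \<in> {1..K} \<Longrightarrow>
    R j k1 = Some t \<Longrightarrow> R j k2 = Some t \<Longrightarrow> k1 = k2"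
  using cross_cells_empty[of j j k1 k2 t] by fastforce

definition occ :: "'a \<Rightarrow> (nat \<times> nat) set" where
  "occ t = {(k, j). k \<in> {1..K} \<and> j \<in> {1..F} \<and> R j k = Some t}"

definition filled :: "nat \<Rightarrow> nat set" where
  "filled k = {j\<in>{1..F}. R j k \<noteq> None}"

lemma finite_occ: "finite (occ t)"
  by (rule finite_subset[of _ "{1..K} \<times> {1..F}"]) (auto simp: occ_def)

lemma inj_on_snd_occ: "inj_on snd (occ t)"
  unfolding inj_on_def occ_def using row_unique by auto

lemma card_filled: "k \<in> {1..K} \<Longrightarrow> card (filled k) = F - Z"
proof -
  assume k: "k \<in> {1..K}"
  have "F = card {1..F}" by simp
  also have "{1..F} = filled k \<union> {j\<in>{1..F}. R j k = None}"
    unfolding filled_def by auto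
  also have "card \<dots> = card (filled k) + card {j\<in>{1..F}. R j k = None}"
    by (rule card_Un_disjoint) (auto simp: filled_def)
  finally show ?thesis using card_empty_cells[OF k] by simp
qed

lemma card_occ_le: "card (occ t) \<le> Z + 1"
proof (cases "occ t = {}")
  case False
  then obtain k1 j1 where o1: "(k1, j1) \<in> occ t" by auto
  then have k1: "k1 \<in> {1..K}" by (simp add: occ_def)
  have "snd ` occ t \<subseteq> insert j1 {j\<in>{1..F}. R j k1 = None}"
  proof
    fix j assume "j \<in> snd ` occ t"
    then obtain k where "(k, j) \<in> occ t" by auto
    then show "j \<in> insert j1 {j\<in>{1..F}. R j k1 = None}"
    proof (cases "j = j1")
      case False
      with o1 \<open>(k, j) \<in> occ t\<close> show ?thesis
        using cross_cells_empty[of j j1 k k1 t] by (auto simp: occ_def)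
    qed simp
  qed
  then have "card (snd ` occ t) \<le> card (insert j1 {j\<in>{1..F}. R j k1 = None})"
    by (rule card_mono[rotated]) simp
  also have "\<dots> \<le> Z + 1"
    using card_empty_cells[OF k1] by (simp add: card_insert_if)
  finally show ?thesis using card_image[OF inj_on_snd_occ] by simp
qed simp

lemma sum_card_occ: "(\<Sum>t\<in>S. card (occ t)) = (F - Z) * K"
proof -
  have "(\<Sum>t\<in>S. card (occ t)) = card (\<Union>t\<in>S. occ t)"
    by (rule card_UN_disjoint[symmetric]) (simp_all add: finite_alphabet finite_occ, auto simp: occ_def)
  also have "(\<Union>t\<in>S. occ t) = (SIGMA k:{1..K}. filled k)"
    unfolding occ_def filled_def using entry_in_alphabet by auto
  also have "card \<dots> = (\<Sum>k\<in>{1..K}. card (filled k))"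
    by (rule card_SigmaI) (simp_all add: filled_def)
  also have "\<dots> = (\<Sum>k\<in>{1..K}. F - Z)"
    using card_filled by simp
  finally show ?thesis by simp
qed

lemma alphabet_excess:
  "(Z + 1) * card S = (F - Z) * K + (\<Sum>t\<in>S. Z + 1 - card (occ t))"
proof -
  have "(\<Sum>t\<in>S. card (occ t)) + (\<Sum>t\<in>S. Z + 1 - card (occ t)) = (\<Sum>t\<in>S. Z + 1)"
    using card_occ_le by (simp add: sum.distrib[symmetric])
  then show ?thesis using sum_card_occ by (simp add: mult.commute)
qed

end

lemma doubleton_subset_four:
  assumes "P \<subseteq> {1..4::nat}" "card P = 2"
  shows "P \<in> {{1,2}, {1,3}, {1,4}, {2,3}, {2,4}, {3,4}}"
proof -
  obtain x y where "P = {x, y}" "x \<noteq> y" using assms(2) card_2_iff by metis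
  moreover have "x \<in> {1,2,3,4}" "y \<in> {1,2,3,4}" using assms(1) \<open>P = {x, y}\<close> by auto
  ultimately show ?thesis
    by (elim insertE emptyE) (simp_all add: insert_commute)
qed

text \<open>Read \<open>E\<close> as two arcs on four vertices. The balance equations say that the net number
  of arcs from \<open>x\<close> to \<open>y\<close> is the potential difference \<open>\<beta> x - \<beta> y\<close>; this fails for two
  non-opposite arcs with distinct tails.\<close>
lemma two_arcs_not_potential:
  fixes \<beta> :: "nat \<Rightarrow> nat"
  assumes balance: "\<And>x y. x \<in> {1..4} \<Longrightarrow> y \<in> {1..4} \<Longrightarrow> x \<noteq> y \<Longrightarrow>
      \<beta> y + of_bool ((x, y) \<in> E) = \<beta> x + of_bool ((y, x) \<in> E)"
    and E: "E = {(j1, a), (j2, b)}"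
    and range: "j1 \<in> {1..4}" "a \<in> {1..4}" "j2 \<in> {1..4}" "b \<in> {1..4}"
    and distinct: "j1 \<noteq> a" "j2 \<noteq> b" "j1 \<noteq> j2" "a \<noteq> j2" "b \<noteq> j1"
  shows False
proof -
  have arc: "\<beta> a + 1 = \<beta> j1" using balance[of j1 a] E range distinct by auto
  have "\<beta> j2 = \<beta> j1" using balance[of j1 j2] E range distinct by auto
  show False
  proof (cases "b = a")
    case True
    have "\<not> {1..4::nat} \<subseteq> {j1, a, j2}"
    proof
      assume "{1..4::nat} \<subseteq> {j1, a, j2}"
      then have "card {1..4::nat} \<le> card (set [j1, a, j2])" by (intro card_mono) auto
      also have "\<dots> \<le> 3" using card_length[of "[j1, a, j2]"] by simp
      finally show False by simp
    qed
    then obtain w where "w \<in> {1..4}" "w \<notin> {j1, a, j2}" by blast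
    then have "\<beta> w = \<beta> j1" "\<beta> w = \<beta> a"
      using balance[of j1 w] balance[of a w] E range distinct True by auto
    with arc show False by simp
  next
    case False
    then have "\<beta> j2 = \<beta> a" using balance[of j2 a] E range distinct by auto
    with arc \<open>\<beta> j2 = \<beta> j1\<close> show False by simp
  qed
qed

locale pda_4_2 = pda 4 K 2 S R for K :: nat and S :: "'a set" and R
begin

lemma card_filled_4_2: "k \<in> {1..K} \<Longrightarrow> card (filled k) = 2"
  using card_filled by simp

lemma filled_subset: "filled k \<subseteq> {1..4}"
  unfolding filled_def by auto

definition pattern_cols :: "nat \<Rightarrow> nat \<Rightarrow> nat set" where
  "pattern_cols x y = {k\<in>{1..K}. filled k = {x, y}}"

definition full_missing :: "nat \<Rightarrow> 'a set" where
  "full_missing y = {t\<in>S. card (occ t) = 3 \<and> y \<notin> snd ` occ t}"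

definition deficient_cols :: "nat \<Rightarrow> nat \<Rightarrow> nat set" where
  "deficient_cols x y = {k\<in>pattern_cols x y. card (occ (the (R x k))) \<noteq> 3}"

lemma pattern_cols_commute: "pattern_cols x y = pattern_cols y x"
  unfolding pattern_cols_def by (simp add: insert_commute)

lemma finite_pattern_cols: "finite (pattern_cols x y)"
  unfolding pattern_cols_def by simp

lemma pattern_cols_entry: "k \<in> pattern_cols x y \<Longrightarrow> R x k = Some (the (R x k))"
proof -
  assume "k \<in> pattern_cols x y"
  then have "x \<in> filled k" unfolding pattern_cols_def by simp
  then show ?thesis unfolding filled_def by auto
qed

lemma rows_of_full_missing:
  assumes "t \<in> full_missing y" "y \<in> {1..4}"
  shows "snd ` occ t = {1..4} - {y}"
proof -
  have sub: "snd ` occ t \<subseteq> {1..4} - {y}" using assms(1) unfolding full_missing_def occ_def by auto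
  have "card (snd ` occ t) = 3"
    using assms(1) card_image[OF inj_on_snd_occ] unfolding full_missing_def by simp
  moreover have "card ({1..4::nat} - {y}) = 3"
    using assms(2) card_Diff_singleton[of y "{1..4::nat}"] by simp
  ultimately have "card (snd ` occ t) = card ({1..4::nat} - {y})" by (simp only:)
  with card_subset_eq[OF finite_Diff[OF finite_atLeastAtMost] sub] show ?thesis by blast
qed

lemma full_missing_in_pattern_cols:
  assumes t: "t \<in> full_missing y" and xy: "x \<in> {1..4}" "y \<in> {1..4}" "x \<noteq> y"
  obtains k where "k \<in> pattern_cols x y" "R x k = Some t"
proof -
  have rows: "snd ` occ t = {1..4} - {y}" using rows_of_full_missing[OF t xy(2)] .
  have "x \<in> snd ` occ t" using rows xy by simp
  then obtain k where "(k, x) \<in> occ t" by (metis imageE prod.collapse)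
  then have k: "k \<in> {1..K}" "R x k = Some t" unfolding occ_def by auto
  have "filled k \<subseteq> {x, y}"
  proof
    fix j assume j: "j \<in> filled k"
    show "j \<in> {x, y}"
    proof (rule ccontr)
      assume "j \<notin> {x, y}"
      moreover have "j \<in> {1..4}" using j filled_subset by blast
      ultimately have "j \<in> snd ` occ t" using rows by simp
      then obtain k' where "(k', j) \<in> occ t" by (metis imageE prod.collapse)
      then have "R j k = None"
        using cross_cells_empty[of x j k k' t] k xy \<open>j \<notin> {x, y}\<close> unfolding occ_def by auto
      then show False using j unfolding filled_def by simp
    qed
  qed
  moreover have "card (filled k) = card {x, y}" using card_filled_4_2[OF k(1)] xy(3) by simp
  ultimately have "filled k = {x, y}" by (intro card_subset_eq) simp_all
  then show ?thesis using that k unfolding pattern_cols_def by blast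
qed

lemma pattern_cols_entry_misses_row:
  assumes "k \<in> pattern_cols x y" "R x k = Some t" "x \<in> {1..4}" "y \<in> {1..4}" "x \<noteq> y"
  shows "t \<in> S" "y \<notin> snd ` occ t"
proof -
  have k: "k \<in> {1..K}" "filled k = {x, y}" using assms(1) unfolding pattern_cols_def by auto
  show "t \<in> S" using entry_in_alphabet k(1) assms(2,3) by blast
  show "y \<notin> snd ` occ t"
  proof
    assume "y \<in> snd ` occ t"
    then obtain k' where "(k', y) \<in> occ t" by force
    then have "R y k = None"
      using cross_cells_empty[of x y k k' t] assms k unfolding occ_def by auto
    moreover have "y \<in> filled k" using k by simp
    ultimately show False unfolding filled_def by simp
  qed
qed

text \<open>Reading off the symbol in row \<open>x\<close> matches the columns of pattern \<open>{x, y}\<close> holding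
  a full symbol one-to-one with the full symbols missing row \<open>y\<close>.\<close>
lemma card_pattern_cols:
  assumes xy: "x \<in> {1..4}" "y \<in> {1..4}" "x \<noteq> y"
  shows "card (pattern_cols x y) = card (full_missing y) + card (deficient_cols x y)"
proof -
  let ?full = "pattern_cols x y - deficient_cols x y"
  have "bij_betw (\<lambda>k. the (R x k)) ?full (full_missing y)"
  proof (rule bij_betw_imageI)
    show "inj_on (\<lambda>k. the (R x k)) ?full"
    proof (rule inj_onI)
      fix k k' assume "k \<in> ?full" "k' \<in> ?full" and eq: "the (R x k) = the (R x k')"
      then have k: "k \<in> pattern_cols x y" "k' \<in> pattern_cols x y" by simp_all
      have e: "R x k = Some (the (R x k))" "R x k' = Some (the (R x k))"
        using pattern_cols_entry[OF k(1)] pattern_cols_entry[OF k(2)] eq by simp_all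
      have "k \<in> {1..K}" "k' \<in> {1..K}" using k unfolding pattern_cols_def by simp_all
      from row_unique[OF xy(1) this e] show "k = k'" .
    qed
    show "(\<lambda>k. the (R x k)) ` ?full = full_missing y"
    proof
      show "(\<lambda>k. the (R x k)) ` ?full \<subseteq> full_missing y"
      proof
        fix t assume "t \<in> (\<lambda>k. the (R x k)) ` ?full"
        then obtain k where k: "k \<in> ?full" "t = the (R x k)" by blast
        then have "k \<in> pattern_cols x y" "R x k = Some t" using pattern_cols_entry by auto
        moreover have "card (occ t) = 3" using k unfolding deficient_cols_def by simp
        ultimately show "t \<in> full_missing y"
          using pattern_cols_entry_misses_row[OF _ _ xy] unfolding full_missing_def by blast
      qed
      show "full_missing y \<subseteq> (\<lambda>k. the (R x k)) ` ?full"
      proof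
        fix t assume t: "t \<in> full_missing y"
        then obtain k where k: "k \<in> pattern_cols x y" "R x k = Some t"
          using full_missing_in_pattern_cols xy by blast
        then have "k \<in> ?full" using t unfolding deficient_cols_def full_missing_def by simp
        with k show "t \<in> (\<lambda>k. the (R x k)) ` ?full" by force
      qed
    qed
  qed
  then have "card ?full = card (full_missing y)" by (rule bij_betw_same_card)
  moreover have sub: "deficient_cols x y \<subseteq> pattern_cols x y" unfolding deficient_cols_def by blast
  then have "card (pattern_cols x y) = card ?full + card (deficient_cols x y)"
    using card_Diff_subset[OF finite_subset[OF sub finite_pattern_cols] sub]
      card_mono[OF finite_pattern_cols sub] by simp
  ultimately show ?thesis by simp
qed

lemma card_full_missing_balance:
  assumes "x \<in> {1..4}" "y \<in> {1..4}" "x \<noteq> y"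
  shows "card (full_missing y) + card (deficient_cols x y) =
    card (full_missing x) + card (deficient_cols y x)"
  using card_pattern_cols[OF assms] card_pattern_cols[of y x] assms pattern_cols_commute by simp

lemma card_columns_by_pattern:
  "K = card (pattern_cols 1 2) + card (pattern_cols 1 3) + card (pattern_cols 1 4)
     + card (pattern_cols 2 3) + card (pattern_cols 2 4) + card (pattern_cols 3 4)"
proof -
  define P :: "nat set set" where "P = {{1,2}, {1,3}, {1,4}, {2,3}, {2,4}, {3,4}}"
  have "K = card {1..K}" by simp
  also have "{1..K} = (\<Union>p\<in>P. {k\<in>{1..K}. filled k = p})"
    unfolding P_def using doubleton_subset_four[OF filled_subset card_filled_4_2] by blast
  also have "card \<dots> = (\<Sum>p\<in>P. card {k\<in>{1..K}. filled k = p})"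
    by (rule card_UN_disjoint) (auto simp: P_def)
  also have "\<dots> = card (pattern_cols 1 2) + card (pattern_cols 1 3) + card (pattern_cols 1 4)
     + card (pattern_cols 2 3) + card (pattern_cols 2 4) + card (pattern_cols 3 4)"
    unfolding P_def pattern_cols_def by (simp add: doubleton_eq_iff)
  finally show ?thesis .
qed

lemma six_dvd_if_all_full:
  assumes full: "\<forall>t\<in>S. card (occ t) = 3"
  shows "6 dvd K"
proof -
  have no_deficient: "deficient_cols x y = {}" if xy: "x \<in> {1..4}" "y \<in> {1..4}" "x \<noteq> y" for x y
  proof -
    have "card (occ (the (R x k))) = 3" if "k \<in> pattern_cols x y" for k
      using full pattern_cols_entry_misses_row(1)[OF that pattern_cols_entry[OF that] xy] by blast
    then show ?thesis unfolding deficient_cols_def by blast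
  qed
  define b where "b = card (full_missing 1)"
  have card_full_missing: "card (full_missing y) = b" if "y \<in> {1..4}" for y
    using card_full_missing_balance[of 1 y] no_deficient[of 1 y] no_deficient[of y 1] that unfolding b_def
    by (cases "y = 1") auto
  have "card (pattern_cols x y) = b" if "x \<in> {1..4}" "y \<in> {1..4}" "x \<noteq> y" for x y
    using card_pattern_cols[OF that] no_deficient[OF that] card_full_missing[OF that(2)] by simp
  then have "K = 6 * b" using card_columns_by_pattern by simp
  then show ?thesis by simp
qed

lemma deficient_cols_single_deficit:
  assumes t0: "t0 \<in> S" "card (occ t0) \<noteq> 3" and full: "\<forall>t\<in>S - {t0}. card (occ t) = 3"
    and x: "x \<in> {1..4}"
  shows "deficient_cols x y = {k. (k, x) \<in> occ t0 \<and> filled k = {x, y}}"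
proof -
  have "the (R x k) = t0 \<longleftrightarrow> card (occ (the (R x k))) \<noteq> 3" if "k \<in> pattern_cols x y" for k
  proof -
    have "the (R x k) \<in> S" using entry_in_alphabet[OF x _ pattern_cols_entry[OF that]] that
      unfolding pattern_cols_def by simp
    then show ?thesis using t0 full by blast
  qed
  moreover have "(k, x) \<in> occ t0 \<longleftrightarrow> the (R x k) = t0" if "k \<in> pattern_cols x y" for k
    using pattern_cols_entry[OF that] that x unfolding occ_def pattern_cols_def by auto
  ultimately show ?thesis
    unfolding deficient_cols_def pattern_cols_def occ_def by auto
qed

lemma filled_partner:
  assumes "k \<in> {1..K}" "j \<in> filled k"
  obtains a where "a \<in> {1..4}" "a \<noteq> j" "filled k = {j, a}"
proof -
  obtain u v where uv: "filled k = {u, v}" "u \<noteq> v"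
    using card_filled_4_2[OF assms(1)] card_2_iff by metis
  then have "filled k = {j, if j = u then v else u}" using assms(2) by auto
  with that uv filled_subset show ?thesis by (metis insert_subset)
qed

lemma no_single_deficit: "(\<Sum>t\<in>S. 3 - card (occ t)) \<noteq> 1"
proof
  assume "(\<Sum>t\<in>S. 3 - card (occ t)) = 1"
  from sum_eq_1_iff[OF finite_alphabet, THEN iffD1, OF this]
  obtain t0 where t0: "t0 \<in> S" "3 - card (occ t0) = 1"
    and others: "\<forall>t\<in>S. t0 \<noteq> t \<longrightarrow> 3 - card (occ t) = 0"
    by blast
  have full: "\<forall>t\<in>S - {t0}. card (occ t) = 3"
  proof
    fix t assume "t \<in> S - {t0}"
    then have "3 - card (occ t) = 0" using others by auto
    then show "card (occ t) = 3" using card_occ_le[of t] by simp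
  qed
  have two: "card (occ t0) = 2" using t0(2) card_occ_le[of t0] by simp
  then have deficit: "card (occ t0) \<noteq> 3" by simp
  from two obtain k1 j1 k2 j2 where occ: "occ t0 = {(k1, j1), (k2, j2)}" "(k1, j1) \<noteq> (k2, j2)"
    using card_2_iff by (metis surj_pair)
  then have j12: "j1 \<noteq> j2" using inj_on_snd_occ[of t0] unfolding inj_on_def by auto
  have cells: "k1 \<in> {1..K}" "j1 \<in> {1..4}" "R j1 k1 = Some t0"
    "k2 \<in> {1..K}" "j2 \<in> {1..4}" "R j2 k2 = Some t0"
    using occ unfolding occ_def by blast+
  have "R j2 k1 = None" "R j1 k2 = None" using cross_cells_empty[of j1 j2 k1 k2 t0] cells j12 by auto
  then have "j2 \<notin> filled k1" "j1 \<notin> filled k2" unfolding filled_def by simp_all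
  moreover obtain a where a: "a \<in> {1..4}" "a \<noteq> j1" "filled k1 = {j1, a}"
    using filled_partner[OF cells(1)] cells(2,3) unfolding filled_def by blast
  moreover obtain b where b: "b \<in> {1..4}" "b \<noteq> j2" "filled k2 = {j2, b}"
    using filled_partner[OF cells(4)] cells(5,6) unfolding filled_def by blast
  ultimately have "a \<noteq> j2" "b \<noteq> j1" by auto
  let ?E = "{(j1, a), (j2, b)}"
  have deficient: "card (deficient_cols x y) = of_bool ((x, y) \<in> ?E)"
    if xy: "x \<in> {1..4}" "y \<in> {1..4}" "x \<noteq> y" for x y
  proof -
    have "deficient_cols x y = {k. (k, x) \<in> occ t0 \<and> filled k = {x, y}}"
      using deficient_cols_single_deficit[OF t0(1) deficit full xy(1)] .
    also have "\<dots> = {k. k = k1 \<and> (x, y) = (j1, a) \<or> k = k2 \<and> (x, y) = (j2, b)}"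
      using occ(1) a(2,3) b(2,3) xy(3) by (auto simp: doubleton_eq_iff)
    finally show ?thesis using j12 by (cases "(x, y) = (j1, a)") auto
  qed
  have balance:
    "card (full_missing y) + of_bool ((x, y) \<in> ?E) = card (full_missing x) + of_bool ((y, x) \<in> ?E)"
    if "x \<in> {1..4}" "y \<in> {1..4}" "x \<noteq> y" for x y
    using card_full_missing_balance[OF that] deficient[OF that] deficient[of y x] that by simp
  show False
    using two_arcs_not_potential[OF balance refl cells(2) a(1) cells(5) b(1)] a(2) b(2) j12
      \<open>a \<noteq> j2\<close> \<open>b \<noteq> j1\<close> by blast
qed

end

definition pda_4_2_size :: "nat \<Rightarrow> nat" where
  "pda_4_2_size K = (if K mod 6 \<in> {0, 2, 5} then (2 * K + 2) div 3 else (2 * K + 2) div 3 + 1)"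

lemma pda_4_2_size_residues:
  assumes "r < 6"
  shows "pda_4_2_size (6 * m + r) = 4 * m + [0, 2, 2, 3, 4, 4] ! r"
proof -
  have div: "(2 * (6 * m + r) + 2) div 3 = 4 * m + (2 * r + 2) div 3" by simp
  have mod: "(6 * m + r) mod 6 = r" using assms by simp
  consider "r = 0" | "r = 1" | "r = 2" | "r = 3" | "r = 4" | "r = 5" using assms by linarith
  then show ?thesis unfolding pda_4_2_size_def div mod by cases simp_all
qed

lemma pda_4_2_size_le:
  fixes s K :: nat
  assumes "2 * K \<le> 3 * s" "3 * s \<noteq> 2 * K + 1" "3 * s = 2 * K \<Longrightarrow> 6 dvd K"
  shows "pda_4_2_size K \<le> s"
proof -
  define m r where "m = K div 6" and "r = K mod 6"
  then have K: "K = 6 * m + r" "r < 6" by simp_all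
  have "\<not> 6 dvd K" if "r \<noteq> 0"
    using K that nat_dvd_not_less[of r 6] by (simp add: dvd_add_right_iff)
  then consider "r = 0" | "r \<noteq> 0" "3 * s \<noteq> 2 * K" using assms(3) by blast
  then show ?thesis
  proof cases
    case 1
    then show ?thesis using assms(1) K pda_4_2_size_residues[of r m] by simp
  next
    case 2
    then have s: "3 * s \<ge> 2 * K + 2" using assms(1,2) by linarith
    consider "r = 1" | "r = 2" | "r = 3" | "r = 4" | "r = 5" using K(2) 2(1) by linarith
    then show ?thesis using s K pda_4_2_size_residues[of r m] by cases simp_all
  qed
qed

context pda_4_2
begin

lemma pda_4_2_size_le_card: "pda_4_2_size K \<le> card S"
proof (rule pda_4_2_size_le)
  have excess: "3 * card S = 2 * K + (\<Sum>t\<in>S. 3 - card (occ t))"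
    using alphabet_excess by simp
  show "2 * K \<le> 3 * card S" using excess by linarith
  show "3 * card S \<noteq> 2 * K + 1" using excess no_single_deficit by linarith
  assume "3 * card S = 2 * K"
  then have "(\<Sum>t\<in>S. 3 - card (occ t)) = 0" using excess by linarith
  from sum_eq_0_iff[OF finite_alphabet, THEN iffD1, OF this]
  have deficits: "\<forall>t\<in>S. 3 - card (occ t) = 0" .
  have "\<forall>t\<in>S. card (occ t) = 3"
  proof
    fix t assume "t \<in> S"
    with deficits have "3 - card (occ t) = 0" by blast
    with card_occ_le[of t] show "card (occ t) = 3" by simp
  qed
  then show "6 dvd K" by (rule six_dvd_if_all_full)
qed

end

definition array_append :: "nat \<Rightarrow> nat \<Rightarrow> (nat \<Rightarrow> nat \<Rightarrow> nat option) \<Rightarrow>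
    (nat \<Rightarrow> nat \<Rightarrow> nat option) \<Rightarrow> nat \<Rightarrow> nat \<Rightarrow> nat option" where
  "array_append K1 n1 R1 R2 j k =
     (if k \<le> K1 then R1 j k else map_option (\<lambda>t. t + n1) (R2 j (k - K1)))"

lemma is_PDA_append:
  assumes "is_PDA F K1 Z {..<n1} R1" "is_PDA F K2 Z {..<n2} R2"
  shows "is_PDA F (K1 + K2) Z {..<n1 + n2} (array_append K1 n1 R1 R2)"
proof -
  interpret A: pda F K1 Z "{..<n1}" R1 using assms(1) by (rule pda.intro)
  interpret B: pda F K2 Z "{..<n2}" R2 using assms(2) by (rule pda.intro)
  let ?R = "array_append K1 n1 R1 R2"
  have left: "?R j k = R1 j k" if "k \<le> K1" for j k
    using that unfolding array_append_def by simp
  have right: "?R j k = map_option (\<lambda>t. t + n1) (R2 j (k - K1))" if "\<not> k \<le> K1" for j k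
    using that unfolding array_append_def by simp
  txt \<open>The two alphabets are disjoint, so equal symbols never lie in different blocks.\<close>
  have block: "k \<in> {1..K1} \<and> R1 j k = Some t \<and> t < n1 \<or>
      k - K1 \<in> {1..K2} \<and> \<not> k \<le> K1 \<and> R2 j (k - K1) = Some (t - n1) \<and> n1 \<le> t"
    if "j \<in> {1..F}" "k \<in> {1..K1 + K2}" "?R j k = Some t" for j k t
  proof (cases "k \<le> K1")
    case True
    with that show ?thesis using A.entry_in_alphabet left by auto
  next
    case False
    with that show ?thesis using right by auto
  qed
  show ?thesis
  proof (rule is_PDA_intro)
    show "?R j k = None \<or> (\<exists>t\<in>{..<n1 + n2}. ?R j k = Some t)"
      if "j \<in> {1..F}" "k \<in> {1..K1 + K2}" for j k
    proof (cases "?R j k")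
      case (Some t)
      with block[OF that Some] B.entry_in_alphabet[OF that(1)] show ?thesis by fastforce
    qed simp
    show "card {j\<in>{1..F}. ?R j k = None} = Z" if "k \<in> {1..K1 + K2}" for k
    proof (cases "k \<le> K1")
      case True
      then show ?thesis using A.card_empty_cells[of k] that left by simp
    next
      case False
      moreover have "k - K1 \<in> {1..K2}" using False that by auto
      ultimately show ?thesis using B.card_empty_cells[of "k - K1"] right by simp
    qed
    show "?R j1 k2 = None \<and> ?R j2 k1 = None"
      if "j1 \<in> {1..F}" "j2 \<in> {1..F}" "k1 \<in> {1..K1 + K2}" "k2 \<in> {1..K1 + K2}"
        "(j1, k1) \<noteq> (j2, k2)" "?R j1 k1 = Some t" "?R j2 k2 = Some t" for j1 j2 k1 k2 t
      using block[OF that(1,3,6)] block[OF that(2,4,7)]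
    proof (elim disjE conjE)
      assume "k1 \<in> {1..K1}" "R1 j1 k1 = Some t" "k2 \<in> {1..K1}" "R1 j2 k2 = Some t"
      then show ?thesis using A.cross_cells_empty[of j1 j2 k1 k2 t] that(1,2,5) left by simp
    next
      assume "k1 - K1 \<in> {1..K2}" "\<not> k1 \<le> K1" "R2 j1 (k1 - K1) = Some (t - n1)"
        "k2 - K1 \<in> {1..K2}" "\<not> k2 \<le> K1" "R2 j2 (k2 - K1) = Some (t - n1)"
      moreover have "(j1, k1 - K1) \<noteq> (j2, k2 - K1)"
        using that(5) \<open>\<not> k1 \<le> K1\<close> \<open>\<not> k2 \<le> K1\<close> by auto
      ultimately show ?thesis
        using B.cross_cells_empty[of j1 j2 "k1 - K1" "k2 - K1" "t - n1"] that(1,2) right by simp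
    qed linarith+
  qed simp
qed

definition array_of_rows :: "'a option list list \<Rightarrow> nat \<Rightarrow> nat \<Rightarrow> 'a option" where
  "array_of_rows L j k =
     (if 1 \<le> j \<and> j \<le> length L \<and> 1 \<le> k \<and> k \<le> length (L ! (j - 1))
      then L ! (j - 1) ! (k - 1) else None)"

lemma filter_set_Collect: "{x \<in> set xs. P x} = set (filter P xs)"
  by auto

text \<open>A form of the conditions suited to evaluation on explicit arrays: only filled cells are
  inspected, and each of the two cross cells of a pair is checked from its own row.\<close>
lemma is_PDA_by_cells:
  assumes "finite S"
    and "\<forall>j\<in>{1..F}. \<forall>k\<in>{1..K}. case R j k of None \<Rightarrow> True | Some t \<Rightarrow> t \<in> S \<and>
      (\<forall>j'\<in>{1..F}. \<forall>k'\<in>{1..K}. (j', k') \<noteq> (j, k) \<and> R j' k' = Some t \<longrightarrow> R j k' = None)"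
    and "\<forall>k\<in>{1..K}. card {j\<in>{1..F}. R j k = None} = Z"
  shows "is_PDA F K Z S R"
proof (rule is_PDA_intro)
  show "finite S" by fact
  show "R j k = None \<or> (\<exists>t\<in>S. R j k = Some t)" if "j \<in> {1..F}" "k \<in> {1..K}" for j k
    using assms(2) that by (cases "R j k") fastforce+
  show "card {j\<in>{1..F}. R j k = None} = Z" if "k \<in> {1..K}" for k
    using assms(3) that by blast
  show "R j1 k2 = None \<and> R j2 k1 = None"
    if "j1 \<in> {1..F}" "j2 \<in> {1..F}" "k1 \<in> {1..K}" "k2 \<in> {1..K}" "(j1, k1) \<noteq> (j2, k2)"
      "R j1 k1 = Some t" "R j2 k2 = Some t" for j1 j2 k1 k2 t
    using assms(2) that by fastforce
qed

lemmas array_evaluation = atLeastAtMost_upt atLeast_upt filter_set_Collect card_set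

lemma is_PDA_no_columns: "is_PDA F 0 Z {} R"
  unfolding is_PDA_def by simp

lemma array_6: "is_PDA 4 6 2 {..<4::nat} (array_of_rows
  [[Some 0, Some 2, Some 3, None,   None,   None  ],
   [Some 1, None,   None,   Some 2, Some 3, None  ],
   [None,   Some 1, None,   Some 0, None,   Some 3],
   [None,   None,   Some 1, None,   Some 0, Some 2]])"
  by (rule is_PDA_by_cells) (unfold array_evaluation, simp_all add: array_of_rows_def upt_rec)

lemma array_1: "is_PDA 4 1 2 {..<2::nat} (array_of_rows [[Some 0], [Some 1], [None], [None]])"
  by (rule is_PDA_by_cells) (unfold array_evaluation, simp_all add: array_of_rows_def upt_rec)

lemma array_2: "is_PDA 4 2 2 {..<2::nat} (array_of_rows
  [[Some 0, None], [Some 1, None], [None, Some 0], [None, Some 1]])"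
  by (rule is_PDA_by_cells) (unfold array_evaluation, simp_all add: array_of_rows_def upt_rec)

lemma array_3: "is_PDA 4 3 2 {..<3::nat} (array_of_rows
  [[Some 0, Some 2, None], [Some 1, None, Some 2], [None, Some 1, Some 0], [None, None, None]])"
  by (rule is_PDA_by_cells) (unfold array_evaluation, simp_all add: array_of_rows_def upt_rec)

lemma array_4: "is_PDA 4 4 2 {..<4::nat} (array_of_rows
  [[Some 0, Some 2, None, None], [Some 1, Some 3, None, None],
   [None, None, Some 0, Some 2], [None, None, Some 1, Some 3]])"
  by (rule is_PDA_by_cells) (unfold array_evaluation, simp_all add: array_of_rows_def upt_rec)

lemma array_5: "is_PDA 4 5 2 {..<4::nat} (array_of_rows
  [[Some 0, Some 2, Some 3, None,   None  ],
   [Some 1, None,   None,   Some 2, Some 3],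
   [None,   Some 1, None,   Some 0, None  ],
   [None,   None,   Some 1, None,   Some 0]])"
  by (rule is_PDA_by_cells) (unfold array_evaluation, simp_all add: array_of_rows_def upt_rec)

lemma pda_4_2_multiple_of_six: "\<exists>R. is_PDA 4 (6 * m) 2 {..<4 * m} R"
proof (induction m)
  case 0
  show ?case using is_PDA_no_columns by auto
next
  case (Suc m)
  then obtain R where "is_PDA 4 (6 * m) 2 {..<4 * m} R" by blast
  from is_PDA_append[OF this array_6] show ?case by (auto simp: algebra_simps)
qed

lemma pda_4_2_remainder: "r < 6 \<Longrightarrow> \<exists>R. is_PDA 4 r 2 {..<[0, 2, 2, 3, 4, 4 :: nat] ! r} R"
proof -
  assume "r < 6"
  then consider "r = 0" | "r = 1" | "r = 2" | "r = 3" | "r = 4" | "r = 5" by linarith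
  then show ?thesis
    by cases (use is_PDA_no_columns array_1 array_2 array_3 array_4 array_5 in auto)
qed

lemma pda_4_2_attains_size: "\<exists>R. is_PDA 4 K 2 {..<pda_4_2_size K} R"
proof -
  obtain R1 where R1: "is_PDA 4 (6 * (K div 6)) 2 {..<4 * (K div 6)} R1"
    using pda_4_2_multiple_of_six by blast
  obtain R2 where R2: "is_PDA 4 (K mod 6) 2 {..<[0, 2, 2, 3, 4, 4 :: nat] ! (K mod 6)} R2"
    using pda_4_2_remainder[of "K mod 6"] by auto
  have "pda_4_2_size K = 4 * (K div 6) + [0, 2, 2, 3, 4, 4] ! (K mod 6)"
    using pda_4_2_size_residues[of "K mod 6" "K div 6"] by simp
  with is_PDA_append[OF R1 R2] show ?thesis
    unfolding mult_div_mod_eq by auto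
qed

lemma s_PDA_eqI:
  assumes "is_PDA F K Z (S :: nat set) R" "card S = n"
    and "\<And>(S' :: nat set) R'. is_PDA F K Z S' R' \<Longrightarrow> n \<le> card S'"
  shows "s_PDA F K Z = n"
  unfolding s_PDA_def by (rule Least_equality) (use assms in blast)+

lemma s_PDA_4_2: "s_PDA 4 K 2 = pda_4_2_size K"
proof -
  obtain R where "is_PDA 4 K 2 {..<pda_4_2_size K} R" using pda_4_2_attains_size by blast
  then show ?thesis
    by (rule s_PDA_eqI) (simp_all add: pda_4_2.pda_4_2_size_le_card[unfolded pda_4_2_def, OF pda.intro])
qed

lemma ceiling_two_thirds: "\<lceil>2 * real K / 3\<rceil> = int ((2 * K + 2) div 3)"
  by (rule ceiling_unique) linarith+

text \<open>The formula holds for \<open>K = 0\<close> as well.\<close>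
theorem mainTheorem14:
  fixes K :: nat
  assumes "K \<ge> 1"
  shows "int (s_PDA 4 K 2) =
    (if K mod 6 \<in> {0, 2, 5} then \<lceil>2 * real K / 3\<rceil> else \<lceil>2 * real K / 3\<rceil> + 1)"
  unfolding s_PDA_4_2 pda_4_2_size_def ceiling_two_thirds by simp

end
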